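(* Let $\mathcal{X}$ be a Banach space and $\mathcal{U}=\mathcal{X}^*$ (duality pairing $\langle\cdot,\cdot\rangle_{\mathcal{U},\mathcal{X}}$), $\mathcal{W},\mathcal{Y}$ reflexive Banach spaces, $\mathcal{G}$ a Hilbert space, $g^\delta\in\mathcal{G}$, $\alpha>0$, $A\in L(\mathcal{Y},\mathcal{W}^* )$ continuously invertible, $B\in L(\mathcal{U},\mathcal{W}^* )$ admitting $B^*\in L(\mathcal{W},\mathcal{X})$ with $\langle Bu,w\rangle_{\mathcal{W}^*,\mathcal{W}}=\langle u,B^*w\rangle_{\mathcal{U},\mathcal{X}}$ for all $u\in\mathcal{U}$, $w\in\mathcal{W}$, and $C\in L(\mathcal{Y},\mathcal{G})$. Let $\mathcal{R}_\alpha$ be the indicator function of $B^\mathcal{U}_{1/\alpha}=\{u\in\mathcal{U}:\|u\|_\mathcal{U}\le1/\alpha\}$ and $J_\alpha(u,y)=\frac12\|Cy-g^\delta\|_\mathcal{G}^2+\mathcal{R}_\alpha(u)$. Let $\mathcal{U}_h\subset\mathcal{U}$, $\mathcal{Y}_h\subset\mathcal{Y}$, $\mathcal{W}_h\subset\mathcal{W}$ be finite-dimensional subspaces. Let $(\bar u,\bar y)$ minimize $J_\alpha$ over $\mathcal{U}\times\mathcal{Y}$ subject to $Ay=Bu$, and let $(\bar u_h,\bar y_h)$ minimize $J_\alpha$ over $\mathcal{U}_h\times\mathcal{Y}_h$ subject to $\langle Ay-Bu,w_h\rangle_{\mathcal{W}^*,\mathcal{W}}=0$ for all $w_h\in\mathcal{W}_h$,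 with $\bar w_h\in\mathcal{W}_h$ such that $$\langle C^*(C\bar y_h-g^\delta)+A^*\bar w_h,y_h\rangle_{\mathcal{Y}^*,\mathcal{Y}}=0\ \forall y_h\in\mathcal{Y}_h,\quad \bar u_h\in B^{\mathcal{U}_h}_{1/\alpha},\ \ \langle u_h-\bar u_h,B^*\bar w_h\rangle_{\mathcal{U},\mathcal{X}}\le0\ \forall u_h\in B^{\mathcal{U}_h}_{1/\alpha},$$ where $B^{\mathcal{U}_h}_{1/\alpha}=B^\mathcal{U}_{1/\alpha}\cap\mathcal{U}_h$. Let $\mathcal{J}^\mathcal{X}:\mathcal{X}\to\mathcal{U}$ be a duality mapping, i.e. $\|\mathcal{J}^\mathcal{X}(x)\|_\mathcal{U}=1$ and $\langle\mathcal{J}^\mathcal{X}(x),x\rangle_{\mathcal{U},\mathcal{X}}=\|x\|_\mathcal{X}$ for all $x\in\mathcal{X}$. Let $\hat w\in\mathcal{W}$ solve $C^*(C\bar y_h-g^\delta)+A^*\hat w=0$ and define $$\rho_y:=A\bar y_h-B\bar u_h,\qquad \rho_u:=\alpha\bar u_h-\mathcal{J}^\mathcal{X}(B^*\bar w_h),$$ $$D(B^*\hat w,B^*\bar w_h):=\langle\mathcal{J}^\mathcal{X}(B^*\hat w)-\mathcal{J}^\mathcal{X}(B^*\bar w_h),B^*(\hat w-\bar w_h)\rangle_{\mathcal{U},\mathcal{X}}.$$ Then $$\|C\bar y_h-C\bar y\|_\mathcal{G}^2\le\frac4\alpha\langle-\rho_u,B^*\hat w\rangle_{\mathcal{U},\mathcal{X}}+\frac4\alpha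 D(B^*\hat w,B^*\bar w_h)+4\|CA^{-1}\rho_y\|_\mathcal{G}^2,$$ $$J_\alpha(\bar u_h,\bar y_h)-J_\alpha(\bar u,\bar y)\le\frac1\alpha\langle-\rho_u,B^*\hat w\rangle_{\mathcal{U},\mathcal{X}}+\frac1\alpha D(B^*\hat w,B^*\bar w_h)+\|CA^{-1}\rho_y\|_\mathcal{G}\,\|C\bar y_h-g^\delta\|_\mathcal{G}.$$
   Context: $A^*\in L(\mathcal{W},\mathcal{Y}^* )$ and $C^*\in L(\mathcal{G},\mathcal{Y}^* )$ denote the adjoints defined by $\langle Ay,w\rangle_{\mathcal{W}^*,\mathcal{W}}=\langle y,A^*w\rangle_{\mathcal{Y},\mathcal{Y}^*}$ and $(Cy,g)_\mathcal{G}=\langle y,C^*g\rangle_{\mathcal{Y},\mathcal{Y}^*}$. $D$ is the symmetric Bregman distance associated with $\|\cdot\|_\mathcal{X}$. *)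

theory Defs
  imports "HOL-Analysis.Analysis"
begin

(* Dual space of a normed space 'a is 'a =>L real; the duality pairing is application. *)

definition reflexive_space :: "'a::real_normed_vector itself \<Rightarrow> bool" where
  "reflexive_space _ \<longleftrightarrow>
     (\<forall>\<phi> :: ('a \<Rightarrow>\<^sub>L real) \<Rightarrow>\<^sub>L real. \<exists>x::'a. \<forall>f. blinfun_apply \<phi> f = blinfun_apply f x)"

definition finite_dim_subspace :: "'a::real_vector set \<Rightarrow> bool" where
  "finite_dim_subspace S \<longleftrightarrow> subspace S \<and> (\<exists>Bs. finite Bs \<and> S = span Bs)"

definition R_alpha :: "real \<Rightarrow> ('x::real_normed_vector \<Rightarrow>\<^sub>L real) \<Rightarrow> ereal" where
  "R_alpha \<alpha> u = (if norm u \<le> 1 / \<alpha> then 0 else \<infinity>)"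

definition J_alpha ::
  "('y::real_normed_vector \<Rightarrow>\<^sub>L 'g::real_inner) \<Rightarrow> 'g \<Rightarrow> real
     \<Rightarrow> ('x::real_normed_vector \<Rightarrow>\<^sub>L real) \<Rightarrow> 'y \<Rightarrow> ereal" where
  "J_alpha C gd \<alpha> u y = ereal ((1/2) * (norm (blinfun_apply C y - gd))\<^sup>2) + R_alpha \<alpha> u"

end

theory Submission
  imports Defs
begin

text \<open>
  Compare the continuous minimizer with the continuous-feasible competitor
  \<open>(\<bar>u\<^sub>h, A\<^sup>-\<^sup>1 B \<bar>u\<^sub>h)\<close>, whose state differs from \<open>\<bar>y\<^sub>h\<close> by \<open>A\<^sup>-\<^sup>1\<rho>\<^sub>y\<close>.
  Testing the adjoint equation of \<open>\<hat>w\<close> with \<open>\<bar>y\<^sub>h - \<bar>y\<close> and with \<open>A\<^sup>-\<^sup>1\<rho>\<^sub>y\<close>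
  turns the cross term \<open>(C\<bar>y\<^sub>h - g\<^sup>\<delta>, C\<bar>y\<^sub>h - C\<bar>y)\<close> into
  \<open>\<langle>\<bar>u - \<bar>u\<^sub>h, B\<^sup>*\<hat>w\<rangle>\<close> plus a residual term; the former is bounded by
  \<open>\<rho>\<^sub>u\<close> and the Bregman distance using only \<open>\<parallel>\<bar>u\<parallel> \<le> 1/\<alpha>\<close> and the two
  defining properties of the duality mapping. Both estimates then follow
  by expanding squared norms in \<open>\<G>\<close>.
\<close>

lemma J_alpha_ball:
  assumes "norm u \<le> 1 / \<alpha>"
  shows "J_alpha C gd \<alpha> u y = ereal ((1/2) * (norm (blinfun_apply C y - gd))\<^sup>2)"
  using assms by (simp add: J_alpha_def R_alpha_def)

lemma J_alpha_le_ball_competitor: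
  assumes le: "J_alpha C gd \<alpha> u y \<le> J_alpha C gd \<alpha> v y'"
    and v_ball: "norm v \<le> 1 / \<alpha>"
  shows "norm u \<le> 1 / \<alpha>"
    and "norm (blinfun_apply C y - gd) \<le> norm (blinfun_apply C y' - gd)"
proof -
  show u_ball: "norm u \<le> 1 / \<alpha>"
  proof (rule ccontr)
    assume "\<not> norm u \<le> 1 / \<alpha>"
    then have "J_alpha C gd \<alpha> u y = \<infinity>" by (simp add: J_alpha_def R_alpha_def)
    with le show False by (simp add: J_alpha_ball[OF v_ball])
  qed
  from le have "(norm (blinfun_apply C y - gd))\<^sup>2 \<le> (norm (blinfun_apply C y' - gd))\<^sup>2"
    by (simp add: J_alpha_ball[OF u_ball] J_alpha_ball[OF v_ball])
  then show "norm (blinfun_apply C y - gd) \<le> norm (blinfun_apply C y' - gd)"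
    by (simp add: power2_le_iff_abs_le)
qed

lemma duality_mapping_pairing_estimate:
  fixes J :: "'x::real_normed_vector \<Rightarrow> ('x \<Rightarrow>\<^sub>L real)"
  assumes J_norm: "\<And>x. norm (J x) \<le> 1"
    and J_pair: "\<And>x. blinfun_apply (J x) x = norm x"
    and \<alpha>: "\<alpha> > 0" and u_ball: "norm u \<le> 1 / \<alpha>"
  shows "blinfun_apply u x - blinfun_apply v x
    \<le> 1 / \<alpha> * blinfun_apply (- (\<alpha> *\<^sub>R v - J x')) x
      + 1 / \<alpha> * blinfun_apply (J x - J x') (x - x')"
proof -
  have "blinfun_apply u x \<le> norm u * norm x"
    using norm_blinfun[of u x] by simp
  also have "\<dots> \<le> 1 / \<alpha> * norm x"
    using u_ball by (rule mult_right_mono) simp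
  finally have u_x: "\<alpha> * blinfun_apply u x \<le> norm x"
    using \<alpha> by (simp add: field_simps)
  have "blinfun_apply (J x) x' \<le> norm x'"
    using norm_blinfun[of "J x" x'] J_norm[of x] mult_right_mono[of "norm (J x)" 1 "norm x'"]
    by simp
  with u_x have "\<alpha> * (blinfun_apply u x - blinfun_apply v x)
      \<le> \<alpha> * (1 / \<alpha> * blinfun_apply (- (\<alpha> *\<^sub>R v - J x')) x
               + 1 / \<alpha> * blinfun_apply (J x - J x') (x - x'))"
    using \<alpha> J_pair[of x] J_pair[of x']
    by (simp add: blinfun.diff_left blinfun.diff_right blinfun.scaleR_left algebra_simps)
  with \<alpha> show ?thesis by simp
qed

lemma adjoint_error_representation:
  assumes Ainv_right: "\<And>f. blinfun_apply A (blinfun_apply Ainv f) = f"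
    and Bs_adj: "\<And>u w. blinfun_apply (blinfun_apply B u) w = blinfun_apply u (blinfun_apply Bs w)"
    and feas: "blinfun_apply A y = blinfun_apply B u"
    and adj: "\<And>y. inner (blinfun_apply C y) z + blinfun_apply (blinfun_apply A y) w = 0"
  shows "inner z (blinfun_apply C yh - blinfun_apply C y)
    = inner z (blinfun_apply C (blinfun_apply Ainv (blinfun_apply A yh - blinfun_apply B uh)))
      + blinfun_apply u (blinfun_apply Bs w) - blinfun_apply uh (blinfun_apply Bs w)"
  using adj[of "yh - y"] adj[of "blinfun_apply Ainv (blinfun_apply A yh - blinfun_apply B uh)"]
  by (simp add: Ainv_right feas Bs_adj inner_commute blinfun.diff_right blinfun.diff_left)

lemma half_norm_diff_sq:
  fixes z e :: "'a::real_inner"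
  shows "(1/2) * (norm (z - e))\<^sup>2 = (1/2) * (norm z)\<^sup>2 - inner z e + (1/2) * (norm e)\<^sup>2"
  by (simp add: power2_norm_eq_inner inner_diff_left inner_diff_right inner_commute algebra_simps)

lemma quadratic_error_estimates:
  fixes z e r :: "'a::real_inner"
  assumes closer: "norm (z - e) \<le> norm (z - r)"
    and cross: "inner z e \<le> P + inner z r"
  shows "(norm e)\<^sup>2 \<le> 4 * P + 4 * (norm r)\<^sup>2"
    and "(1/2) * (norm z)\<^sup>2 - (1/2) * (norm (z - e))\<^sup>2 \<le> P + norm r * norm z"
proof -
  have "(1/2) * (norm (z - e))\<^sup>2 \<le> (1/2) * (norm (z - r))\<^sup>2"
    using closer by (simp add: power_mono)
  then have "(1/2) * (norm e)\<^sup>2 - inner z e \<le> (1/2) * (norm r)\<^sup>2 - inner z r"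
    by (simp only: half_norm_diff_sq)
  then have "(norm e)\<^sup>2 \<le> 2 * P + (norm r)\<^sup>2"
    using cross by linarith
  then show "(norm e)\<^sup>2 \<le> 4 * P + 4 * (norm r)\<^sup>2"
    using zero_le_power2[of "norm e"] zero_le_power2[of "norm r"] by linarith
  have "inner z r \<le> norm r * norm z"
    using norm_cauchy_schwarz[of z r] by (simp add: mult.commute)
  then show "(1/2) * (norm z)\<^sup>2 - (1/2) * (norm (z - e))\<^sup>2 \<le> P + norm r * norm z"
    using cross zero_le_power2[of "norm e"] unfolding half_norm_diff_sq by linarith
qed

theorem proposition4p2:
  fixes A :: "'y::banach \<Rightarrow>\<^sub>L ('w::banach \<Rightarrow>\<^sub>L real)"
    and Ainv :: "('w \<Rightarrow>\<^sub>L real) \<Rightarrow>\<^sub>L 'y"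
    and B :: "('x::banach \<Rightarrow>\<^sub>L real) \<Rightarrow>\<^sub>L ('w \<Rightarrow>\<^sub>L real)"
    and Bs :: "'w \<Rightarrow>\<^sub>L 'x"
    and C :: "'y \<Rightarrow>\<^sub>L 'g::{real_inner, complete_space}"
    and gd :: 'g
    and \<alpha> :: real
    and Uh :: "('x \<Rightarrow>\<^sub>L real) set" and Yh :: "'y set" and Wh :: "'w set"
    and ub :: "'x \<Rightarrow>\<^sub>L real" and yb :: 'y
    and ubh :: "'x \<Rightarrow>\<^sub>L real" and ybh :: 'y and wbh :: 'w
    and JX :: "'x \<Rightarrow> ('x \<Rightarrow>\<^sub>L real)"
    and what :: 'w
  assumes reflW: "reflexive_space TYPE('w)"
    and reflY: "reflexive_space TYPE('y)"
    and alpha_pos: "\<alpha> > 0"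
    and Ainv_left: "\<And>y. blinfun_apply Ainv (blinfun_apply A y) = y"
    and Ainv_right: "\<And>f. blinfun_apply A (blinfun_apply Ainv f) = f"
    and Bs_adj: "\<And>u w. blinfun_apply (blinfun_apply B u) w = blinfun_apply u (blinfun_apply Bs w)"
    and Uh_fd: "finite_dim_subspace Uh"
    and Yh_fd: "finite_dim_subspace Yh"
    and Wh_fd: "finite_dim_subspace Wh"
    and cont_feas: "blinfun_apply A yb = blinfun_apply B ub"
    and cont_min: "\<And>u y. blinfun_apply A y = blinfun_apply B u \<Longrightarrow>
                      J_alpha C gd \<alpha> ub yb \<le> J_alpha C gd \<alpha> u y"
    and ubh_in: "ubh \<in> Uh" and ybh_in: "ybh \<in> Yh"
    and disc_feas: "\<And>wh. wh \<in> Wh \<Longrightarrow>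
                      blinfun_apply (blinfun_apply A ybh - blinfun_apply B ubh) wh = 0"
    and disc_min: "\<And>u y. u \<in> Uh \<Longrightarrow> y \<in> Yh \<Longrightarrow>
                      (\<forall>wh\<in>Wh. blinfun_apply (blinfun_apply A y - blinfun_apply B u) wh = 0) \<Longrightarrow>
                      J_alpha C gd \<alpha> ubh ybh \<le> J_alpha C gd \<alpha> u y"
    and wbh_in: "wbh \<in> Wh"
    and adj_disc: "\<And>yh. yh \<in> Yh \<Longrightarrow>
                      inner (blinfun_apply C yh) (blinfun_apply C ybh - gd)
                      + blinfun_apply (blinfun_apply A yh) wbh = 0"
    and ubh_ball: "norm ubh \<le> 1 / \<alpha>"
    and var_ineq: "\<And>uh. uh \<in> Uh \<Longrightarrow> norm uh \<le> 1 / \<alpha> \<Longrightarrow>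
                      blinfun_apply (uh - ubh) (blinfun_apply Bs wbh) \<le> 0"
    and JX_norm: "\<And>x. norm (JX x) = 1"
    and JX_pair: "\<And>x. blinfun_apply (JX x) x = norm x"
    and what_eq: "\<And>y. inner (blinfun_apply C y) (blinfun_apply C ybh - gd)
                      + blinfun_apply (blinfun_apply A y) what = 0"
  shows "let rho_y = blinfun_apply A ybh - blinfun_apply B ubh;
             rho_u = \<alpha> *\<^sub>R ubh - JX (blinfun_apply Bs wbh);
             D = blinfun_apply (JX (blinfun_apply Bs what) - JX (blinfun_apply Bs wbh))
                   (blinfun_apply Bs (what - wbh))
         in (norm (blinfun_apply C ybh - blinfun_apply C yb))\<^sup>2
              \<le> 4 / \<alpha> * blinfun_apply (- rho_u) (blinfun_apply Bs what) + 4 / \<alpha> * D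
                + 4 * (norm (blinfun_apply C (blinfun_apply Ainv rho_y)))\<^sup>2
          \<and> J_alpha C gd \<alpha> ubh ybh - J_alpha C gd \<alpha> ub yb
              \<le> ereal (1 / \<alpha> * blinfun_apply (- rho_u) (blinfun_apply Bs what) + 1 / \<alpha> * D
                + norm (blinfun_apply C (blinfun_apply Ainv rho_y)) * norm (blinfun_apply C ybh - gd))"
proof -
  define rho_y where "rho_y = blinfun_apply A ybh - blinfun_apply B ubh"
  define P where "P = 1 / \<alpha> * blinfun_apply (- (\<alpha> *\<^sub>R ubh - JX (blinfun_apply Bs wbh))) (blinfun_apply Bs what)
    + 1 / \<alpha> * blinfun_apply (JX (blinfun_apply Bs what) - JX (blinfun_apply Bs wbh))
        (blinfun_apply Bs (what - wbh))"
  define z where "z = blinfun_apply C ybh - gd"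
  define e where "e = blinfun_apply C ybh - blinfun_apply C yb"
  define r where "r = blinfun_apply C (blinfun_apply Ainv rho_y)"
  have min_le: "J_alpha C gd \<alpha> ub yb
      \<le> J_alpha C gd \<alpha> ubh (blinfun_apply Ainv (blinfun_apply B ubh))"
    by (rule cont_min[OF Ainv_right])
  note ub_ball = J_alpha_le_ball_competitor(1)[OF min_le ubh_ball]
    and closer = J_alpha_le_ball_competitor(2)[OF min_le ubh_ball]
  have "blinfun_apply C (blinfun_apply Ainv (blinfun_apply B ubh)) - gd = z - r"
    by (simp add: z_def r_def rho_y_def Ainv_left blinfun.diff_right)
  with closer have "norm (z - e) \<le> norm (z - r)"
    by (simp add: z_def e_def)
  moreover have "inner z e \<le> P + inner z r"
  proof -
    have "inner z e = inner z r + blinfun_apply ub (blinfun_apply Bs what)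
        - blinfun_apply ubh (blinfun_apply Bs what)"
      using adjoint_error_representation[OF Ainv_right Bs_adj cont_feas what_eq]
      by (simp add: z_def e_def r_def rho_y_def)
    moreover have "blinfun_apply ub (blinfun_apply Bs what) - blinfun_apply ubh (blinfun_apply Bs what) \<le> P"
      using duality_mapping_pairing_estimate[OF _ JX_pair alpha_pos ub_ball,
          of "blinfun_apply Bs what" ubh "blinfun_apply Bs wbh"]
      by (simp add: P_def JX_norm blinfun.diff_right)
    ultimately show ?thesis by linarith
  qed
  ultimately have "(norm e)\<^sup>2 \<le> 4 * P + 4 * (norm r)\<^sup>2"
    and "(1/2) * (norm z)\<^sup>2 - (1/2) * (norm (z - e))\<^sup>2 \<le> P + norm r * norm z"
    by (rule quadratic_error_estimates)+
  then show ?thesis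
    unfolding Let_def J_alpha_ball[OF ubh_ball] J_alpha_ball[OF ub_ball]
    by (simp add: P_def z_def e_def r_def rho_y_def algebra_simps)
qed

end
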